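(* Let $d,m,p,n\ge 1$ and let $\{g_{ij}:1\le i\le m,1\le j\le p\}$ be fixed functions $\mathbb{R}^d\to\mathbb{R}$. Fix $\mathbf{X}=[\mathbf{x}_1,\dots,\mathbf{x}_n]^\top\in\mathbb{R}^{n\times d}$. Let $0<v\le 2$ and $r,s>0$ with $1/r+1/s=1$, and let $b_{m,p,n},c_{m,p,n}>0$. Let $\mathcal{F}$ be the class of maps $\boldsymbol{\Psi}=(\psi_1,\dots,\psi_m):\mathbb{R}^d\to\mathbb{R}^m$ of the form $\psi_i(\mathbf{x})=\sum_{j=1}^p\beta_{ij}g_{ij}(\mathbf{x})$ with coefficient matrix $\mathbf{B}=(\beta_{ij})\in\mathbb{R}^{m\times p}$ satisfying $\|\mathbf{B}\|_r=(\sum_{i,j}|\beta_{ij}|^r)^{1/r}\le b_{m,p,n}$, and assume $\|\mathbf{G}(\mathbf{X})\|_{v,s}\le c_{m,p,n}$, where $\mathbf{G}(\mathbf{X})=(g_{ij}(\mathbf{x}_k))\in\mathbb{R}^{m\times p\times n}$ and $\|\mathbf{G}(\mathbf{X})\|_{v,s}=\big\{\sum_{i=1}^m\sum_{j=1}^p\big(\sum_{k=1}^n|g_{ij}(\mathbf{x}_k)|^v\big)^{s/v}\big\}^{1/s}$. Then for every $\epsilon>0$, $$\log\mathcal{N}\big(\{\boldsymbol{\Psi}(\mathbf{X})\in\mathbb{R}^{n\times m}:\boldsymbol{\Psi}\in\mathcal{F}\},\epsilon,\|\cdot\|_2\big)\le \frac{b_{m,p,n}^2c_{m,p,n}^2}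{\epsilon^2}\log(2mp).$$
   Context: $\boldsymbol{\Psi}(\mathbf{X})=[\boldsymbol{\Psi}(\mathbf{x}_1),\dots,\boldsymbol{\Psi}(\mathbf{x}_n)]^\top$. $\|A\|_2$ denotes the Frobenius norm of a matrix $A$. Proper covering number: $\mathcal{N}(\mathcal{U},\epsilon,\|\cdot\|)$ is the smallest cardinality of a subset $\mathcal{V}\subseteq\mathcal{U}$ such that every $u\in\mathcal{U}$ has some $v\in\mathcal{V}$ with $\|u-v\|\le\epsilon$. *)

theory Defs
  imports "HOL-Analysis.Analysis"
begin

definition covering_number :: "('a \<Rightarrow> 'a \<Rightarrow> real) \<Rightarrow> 'a set \<Rightarrow> real \<Rightarrow> nat" where
  "covering_number dst U eps =
     Inf {card V | V. finite V \<and> V \<subseteq> U \<and> (\<forall>u\<in>U. \<exists>v\<in>V. dst u v \<le> eps)}"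

text \<open>n x m real matrices represented as functions nat => nat => real (entries k<n, i<m);
  Frobenius distance.\<close>
definition frob_dist :: "nat \<Rightarrow> nat \<Rightarrow> (nat \<Rightarrow> nat \<Rightarrow> real) \<Rightarrow> (nat \<Rightarrow> nat \<Rightarrow> real) \<Rightarrow> real" where
  "frob_dist n m A C = sqrt (\<Sum>k<n. \<Sum>i<m. (A k i - C k i)^2)"

definition entry_norm :: "real \<Rightarrow> nat \<Rightarrow> nat \<Rightarrow> (nat \<Rightarrow> nat \<Rightarrow> real) \<Rightarrow> real" where
  "entry_norm r m p B = (\<Sum>i<m. \<Sum>j<p. \<bar>B i j\<bar> powr r) powr (1 / r)"

definition G_norm :: "real \<Rightarrow> real \<Rightarrow> nat \<Rightarrow> nat \<Rightarrow> nat \<Rightarrow>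
    (nat \<Rightarrow> nat \<Rightarrow> 'x \<Rightarrow> real) \<Rightarrow> (nat \<Rightarrow> 'x) \<Rightarrow> real" where
  "G_norm v s m p n g X =
     (\<Sum>i<m. \<Sum>j<p. (\<Sum>k<n. \<bar>g i j (X k)\<bar> powr v) powr (s / v)) powr (1 / s)"

definition Psi_mat :: "nat \<Rightarrow> nat \<Rightarrow> nat \<Rightarrow> (nat \<Rightarrow> nat \<Rightarrow> 'x \<Rightarrow> real) \<Rightarrow>
    (nat \<Rightarrow> 'x) \<Rightarrow> (nat \<Rightarrow> nat \<Rightarrow> real) \<Rightarrow> (nat \<Rightarrow> nat \<Rightarrow> real)" where
  "Psi_mat m p n g X B = (\<lambda>k i. if k < n \<and> i < m then (\<Sum>j<p. B i j * g i j (X k)) else 0)"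

end

theory Submission
  imports Defs
begin

text \<open>Every \<open>\<Psi>(X)\<close> is \<open>b c\<close> times a convex combination of the \<open>2mp\<close> unit matrices
  \<open>\<plusminus>G\<^sub>i\<^sub>j(X) / \<parallel>G\<^sub>i\<^sub>j(X)\<parallel>\<^sub>2\<close>: by H\<ouml>lder's inequality the total weight is at most
  \<open>\<parallel>B\<parallel>\<^sub>r\<close> times the \<open>s\<close>-norm of the column norms, and \<open>\<parallel>\<cdot>\<parallel>\<^sub>2 \<le> \<parallel>\<cdot>\<parallel>\<^sub>v\<close> for \<open>v \<le> 2\<close>.
  Maurey's empirical method then approximates each such point within \<open>b c / (\<surd>K + 1) < \<epsilon>\<close>
  by a scaled average of \<open>K = \<lfloor>b\<^sup>2c\<^sup>2/\<epsilon>\<^sup>2\<rfloor>\<close> atoms, so \<open>(2mp)\<^sup>K\<close> centres suffice. Since the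
  class is convex, approximate projections of these centres onto it give a proper
  \<open>\<epsilon>\<close>-cover of the same size.\<close>

definition frob_inner :: "nat \<Rightarrow> nat \<Rightarrow> (nat \<Rightarrow> nat \<Rightarrow> real) \<Rightarrow> (nat \<Rightarrow> nat \<Rightarrow> real) \<Rightarrow> real" where
  "frob_inner n m A B = (\<Sum>k<n. \<Sum>i<m. A k i * B k i)"

definition frob_sq :: "nat \<Rightarrow> nat \<Rightarrow> (nat \<Rightarrow> nat \<Rightarrow> real) \<Rightarrow> real" where
  "frob_sq n m A = (\<Sum>k<n. \<Sum>i<m. (A k i)^2)"

definition mat_convex :: "(nat \<Rightarrow> nat \<Rightarrow> real) set \<Rightarrow> bool" where
  "mat_convex U \<longleftrightarrow>
     (\<forall>x\<in>U. \<forall>y\<in>U. \<forall>t. 0 \<le> t \<and> t \<le> 1 \<longrightarrow> (\<lambda>k i. (1 - t) * x k i + t * y k i) \<in> U)"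

lemma frob_dist_eq_sqrt_frob_sq: "frob_dist n m A C = sqrt (frob_sq n m (\<lambda>k i. A k i - C k i))"
  by (simp add: frob_dist_def frob_sq_def)

lemma frob_sq_nonneg: "frob_sq n m A \<ge> 0"
  unfolding frob_sq_def by (intro sum_nonneg) auto

lemma frob_sq_cong:
  "(\<And>k i. k < n \<Longrightarrow> i < m \<Longrightarrow> A k i = B k i) \<Longrightarrow> frob_sq n m A = frob_sq n m B"
  unfolding frob_sq_def by (intro sum.cong refl) auto

lemma frob_sq_diff:
  "frob_sq n m (\<lambda>k i. A k i - t * B k i)
     = frob_sq n m A - 2 * t * frob_inner n m A B + t^2 * frob_sq n m B"
  unfolding frob_sq_def frob_inner_def
  by (simp add: power2_diff sum_subtractf sum.distrib sum_distrib_left algebra_simps power_mult_distrib)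

lemma frob_sq_scale: "frob_sq n m (\<lambda>k i. t * A k i) = t^2 * frob_sq n m A"
  unfolding frob_sq_def by (simp add: sum_distrib_left power_mult_distrib)

lemma frob_inner_commute: "frob_inner n m A B = frob_inner n m B A"
  unfolding frob_inner_def by (simp add: mult.commute)

section \<open>Maurey's empirical method\<close>

lemma weighted_sum_square_diff:
  fixes p V :: "'z \<Rightarrow> real"
  assumes "finite Z" "sum p Z = 1"
  shows "(\<Sum>z\<in>Z. p z * (w - t * V z)^2) =
    (w - t * (\<Sum>z\<in>Z. p z * V z))^2 + t^2 * ((\<Sum>z\<in>Z. p z * (V z)^2) - (\<Sum>z\<in>Z. p z * V z)^2)"
proof -
  have "(\<Sum>z\<in>Z. p z * (w - t * V z)^2)
      = (\<Sum>z\<in>Z. p z * w^2 - 2*t*w*(p z * V z) + t^2 * (p z * (V z)^2))"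
    by (intro sum.cong refl) (simp add: power2_diff algebra_simps power_mult_distrib)
  also have "\<dots> = w^2 * sum p Z - 2*t*w*(\<Sum>z\<in>Z. p z * V z) + t^2 * (\<Sum>z\<in>Z. p z * (V z)^2)"
    by (simp add: sum_subtractf sum.distrib sum_distrib_left sum_distrib_right algebra_simps)
  finally show ?thesis using assms by (simp add: power2_diff algebra_simps power_mult_distrib)
qed

lemma frob_sq_bias_variance:
  fixes p :: "'z \<Rightarrow> real"
  assumes "finite Z" "sum p Z = 1"
  shows "(\<Sum>z\<in>Z. p z * frob_sq n m (\<lambda>k i. w k i - t * V z k i)) =
    frob_sq n m (\<lambda>k i. w k i - t * (\<Sum>z\<in>Z. p z * V z k i))
    + t^2 * ((\<Sum>z\<in>Z. p z * frob_sq n m (V z)) - frob_sq n m (\<lambda>k i. \<Sum>z\<in>Z. p z * V z k i))"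
proof -
  have swap: "(\<Sum>z\<in>Z. p z * frob_sq n m (F z)) = (\<Sum>k<n. \<Sum>i<m. \<Sum>z\<in>Z. p z * (F z k i)^2)" for F
    unfolding frob_sq_def sum_distrib_left
    by (subst sum.swap, rule sum.cong, simp, subst sum.swap, simp)
  have "(\<Sum>z\<in>Z. p z * frob_sq n m (\<lambda>k i. w k i - t * V z k i))
      = (\<Sum>k<n. \<Sum>i<m. (w k i - t * (\<Sum>z\<in>Z. p z * V z k i))^2 +
          t^2 * ((\<Sum>z\<in>Z. p z * (V z k i)^2) - (\<Sum>z\<in>Z. p z * V z k i)^2))"
    unfolding swap using weighted_sum_square_diff[OF assms] by simp
  also have "\<dots> = frob_sq n m (\<lambda>k i. w k i - t * (\<Sum>z\<in>Z. p z * V z k i))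
      + t^2 * ((\<Sum>k<n. \<Sum>i<m. \<Sum>z\<in>Z. p z * (V z k i)^2) - frob_sq n m (\<lambda>k i. \<Sum>z\<in>Z. p z * V z k i))"
    unfolding frob_sq_def by (simp add: sum.distrib sum_subtractf sum_distrib_left right_diff_distrib)
  finally show ?thesis unfolding swap .
qed

lemma frob_sq_convex_combination_le:
  fixes p :: "'z \<Rightarrow> real"
  assumes "finite Z" "\<forall>z\<in>Z. p z \<ge> 0" "sum p Z = 1"
  shows "frob_sq n m (\<lambda>k i. \<Sum>z\<in>Z. p z * V z k i) \<le> (\<Sum>z\<in>Z. p z * frob_sq n m (V z))"
proof -
  let ?M = "\<lambda>k i. \<Sum>z\<in>Z. p z * V z k i"
  have "0 \<le> (\<Sum>z\<in>Z. p z * frob_sq n m (\<lambda>k i. ?M k i - 1 * V z k i))"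
    using assms(2) by (intro sum_nonneg mult_nonneg_nonneg frob_sq_nonneg) auto
  also have "\<dots> = frob_sq n m (\<lambda>k i. ?M k i - 1 * ?M k i)
      + 1^2 * ((\<Sum>z\<in>Z. p z * frob_sq n m (V z)) - frob_sq n m ?M)"
    by (rule frob_sq_bias_variance[OF assms(1,3)])
  finally show ?thesis by (simp add: frob_sq_def)
qed

lemma exists_le_weighted_mean:
  fixes p f :: "'z \<Rightarrow> real"
  assumes "finite Z" "\<forall>z\<in>Z. p z \<ge> 0" "sum p Z = 1"
  shows "\<exists>z\<in>Z. f z \<le> (\<Sum>z\<in>Z. p z * f z)"
proof (rule ccontr)
  let ?S = "\<Sum>z\<in>Z. p z * f z"
  assume "\<not> ?thesis"
  hence lt: "\<And>z. z \<in> Z \<Longrightarrow> ?S < f z" by force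
  obtain z0 where z0: "z0 \<in> Z" "p z0 > 0"
    using assms by (metis le_less sum.neutral zero_neq_one)
  have "(\<Sum>z\<in>Z. p z * (f z - ?S)) > 0"
  proof (rule sum_pos2[OF assms(1) z0(1)])
    show "0 < p z0 * (f z0 - ?S)" using z0 lt by simp
    show "\<And>z. z \<in> Z \<Longrightarrow> 0 \<le> p z * (f z - ?S)" using lt assms(2) by (simp add: less_imp_le)
  qed
  moreover have "(\<Sum>z\<in>Z. p z * (f z - ?S)) = 0"
    using assms by (simp add: right_diff_distrib sum_subtractf flip: sum_distrib_right)
  ultimately show False by simp
qed

text \<open>Derandomised sampling: by the bias-variance identity the \<open>p\<close>-expected error after adding
  one atom is at most the bound, so some atom does at least as well.\<close>
lemma maurey_greedy_selection:
  fixes p :: "'z \<Rightarrow> real" and V :: "'z \<Rightarrow> nat \<Rightarrow> nat \<Rightarrow> real"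
  assumes fin: "finite Z" and pnn: "\<forall>z\<in>Z. p z \<ge> 0" and p1: "sum p Z = 1"
    and moment: "(\<Sum>z\<in>Z. p z * frob_sq n m (V z)) \<le> 1"
    and x: "\<forall>k<n. \<forall>i<m. x k i = L * (\<Sum>z\<in>Z. p z * V z k i)"
  shows "\<exists>xs. set xs \<subseteq> Z \<and> length xs = j \<and>
     frob_sq n m (\<lambda>k i. w k i + \<alpha> * (real j * x k i - L * (\<Sum>z\<leftarrow>xs. V z k i)))
       \<le> frob_sq n m w + real j * \<alpha>^2 * (L^2 - frob_sq n m x)"
proof (induction j)
  case 0
  show ?case by (intro exI[of _ "[]"]) simp
next
  case (Suc j)
  then obtain xs where xs: "set xs \<subseteq> Z" "length xs = j"
    and IH: "frob_sq n m (\<lambda>k i. w k i + \<alpha> * (real j * x k i - L * (\<Sum>z\<leftarrow>xs. V z k i)))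
       \<le> frob_sq n m w + real j * \<alpha>^2 * (L^2 - frob_sq n m x)" by blast
  define W where "W = (\<lambda>k i. w k i + \<alpha> * (real j * x k i - L * (\<Sum>z\<leftarrow>xs. V z k i)))"
  define M where "M = (\<lambda>k i. \<Sum>z\<in>Z. p z * V z k i)"
  define F where "F = (\<lambda>z. frob_sq n m (\<lambda>k i. (W k i + \<alpha> * x k i) - (\<alpha> * L) * V z k i))"
  have W_x: "frob_sq n m (\<lambda>k i. (W k i + \<alpha> * x k i) - (\<alpha> * L) * M k i) = frob_sq n m W"
    by (rule frob_sq_cong) (simp add: x M_def)
  have x_M: "frob_sq n m x = L^2 * frob_sq n m M"
    using frob_sq_cong[of n m x "\<lambda>k i. L * M k i"] x by (simp add: M_def frob_sq_scale)
  have "(\<Sum>z\<in>Z. p z * F z) = frob_sq n m W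
      + (\<alpha> * L)^2 * ((\<Sum>z\<in>Z. p z * frob_sq n m (V z)) - frob_sq n m M)"
    unfolding F_def W_x[symmetric] M_def by (rule frob_sq_bias_variance[OF fin p1])
  also have "\<dots> \<le> frob_sq n m W + \<alpha>^2 * (L^2 - frob_sq n m x)"
    using mult_left_mono[OF moment, of "(\<alpha> * L)^2"] x_M
    by (simp add: algebra_simps power_mult_distrib)
  finally have mean: "(\<Sum>z\<in>Z. p z * F z) \<le> frob_sq n m W + \<alpha>^2 * (L^2 - frob_sq n m x)" .
  obtain z where z: "z \<in> Z" and Fz: "F z \<le> (\<Sum>z\<in>Z. p z * F z)"
    using exists_le_weighted_mean[OF fin pnn p1] by blast
  have step: "(\<lambda>k i. w k i + \<alpha> * (real (Suc j) * x k i - L * (\<Sum>z\<leftarrow>z # xs. V z k i)))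
     = (\<lambda>k i. (W k i + \<alpha> * x k i) - (\<alpha> * L) * V z k i)"
    unfolding W_def by (simp add: fun_eq_iff ring_distribs)
  have "real (Suc j) * \<alpha>^2 * (L^2 - frob_sq n m x)
      = real j * \<alpha>^2 * (L^2 - frob_sq n m x) + \<alpha>^2 * (L^2 - frob_sq n m x)"
    by (simp add: algebra_simps)
  hence Fz_le: "F z \<le> frob_sq n m w + real (Suc j) * \<alpha>^2 * (L^2 - frob_sq n m x)"
    using Fz mean IH[folded W_def] by linarith
  show ?case
  proof (intro exI[of _ "z # xs"] conjI)
    show "set (z # xs) \<subseteq> Z" "length (z # xs) = Suc j" using z xs by auto
    show "frob_sq n m (\<lambda>k i. w k i + \<alpha> * (real (Suc j) * x k i - L * (\<Sum>z\<leftarrow>z # xs. V z k i)))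
        \<le> frob_sq n m w + real (Suc j) * \<alpha>^2 * (L^2 - frob_sq n m x)"
      unfolding step using Fz_le by (simp add: F_def)
  qed
qed

lemma maurey_approximation:
  fixes p :: "'z \<Rightarrow> real" and V :: "'z \<Rightarrow> nat \<Rightarrow> nat \<Rightarrow> real"
  assumes fin: "finite Z" and pnn: "\<forall>z\<in>Z. p z \<ge> 0" and p1: "sum p Z = 1"
    and Vn: "\<forall>z\<in>Z. frob_sq n m (V z) \<le> 1"
    and x: "\<forall>k<n. \<forall>i<m. x k i = L * (\<Sum>z\<in>Z. p z * V z k i)"
  shows "\<exists>xs. set xs \<subseteq> Z \<and> length xs = K \<and>
     frob_sq n m (\<lambda>k i. x k i - sqrt K / (sqrt K + 1) * L / K * (\<Sum>z\<leftarrow>xs. V z k i))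
       \<le> L^2 / (sqrt K + 1)^2"
proof -
  have moment: "(\<Sum>z\<in>Z. p z * frob_sq n m (V z)) \<le> 1"
  proof -
    have "(\<Sum>z\<in>Z. p z * frob_sq n m (V z)) \<le> (\<Sum>z\<in>Z. p z * 1)"
      using pnn Vn by (intro sum_mono mult_left_mono) auto
    thus ?thesis using p1 by simp
  qed
  show ?thesis
  proof (cases "K = 0")
    case True
    have "frob_sq n m x = frob_sq n m (\<lambda>k i. L * (\<Sum>z\<in>Z. p z * V z k i))"
      by (rule frob_sq_cong) (use x in auto)
    also have "\<dots> \<le> L^2 * 1"
      unfolding frob_sq_scale
      using frob_sq_convex_combination_le[OF fin pnn p1, of n m V] moment
      by (intro mult_left_mono) auto
    finally show ?thesis using True by (intro exI[of _ "[]"]) simp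
  next
    case False
    define q where "q = sqrt K"
    define \<alpha> where "\<alpha> = q / (q + 1)"
    have q0: "q > 0" and qK: "q^2 = real K" using False by (auto simp: q_def)
    \<comment> \<open>Shrinking the empirical mean by \<open>\<alpha>\<close> makes the \<open>frob_sq n m x\<close> terms cancel.\<close>
    obtain xs where xs: "set xs \<subseteq> Z" "length xs = K" and
      le: "frob_sq n m (\<lambda>k i. (1-\<alpha>) * K * x k i + \<alpha> * (real K * x k i - L * (\<Sum>z\<leftarrow>xs. V z k i)))
        \<le> frob_sq n m (\<lambda>k i. (1-\<alpha>) * K * x k i) + real K * \<alpha>^2 * (L^2 - frob_sq n m x)"
      using maurey_greedy_selection[OF fin pnn p1 moment x,
          where j = K and w = "\<lambda>k i. (1-\<alpha>) * K * x k i" and \<alpha> = \<alpha>] by blast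
    define d where "d = frob_sq n m (\<lambda>k i. x k i - \<alpha> * L / K * (\<Sum>z\<leftarrow>xs. V z k i))"
    have eq: "(\<lambda>k i. (1-\<alpha>) * K * x k i + \<alpha> * (real K * x k i - L * (\<Sum>z\<leftarrow>xs. V z k i)))
        = (\<lambda>k i. real K * (x k i - \<alpha> * L / K * (\<Sum>z\<leftarrow>xs. V z k i)))"
      using False by (simp add: fun_eq_iff field_simps)
    have "real K ^ 2 * d \<le> (1-\<alpha>)^2 * real K^2 * frob_sq n m x + real K * \<alpha>^2 * (L^2 - frob_sq n m x)"
      using le unfolding eq frob_sq_scale d_def by (simp add: power_mult_distrib)
    also have "\<dots> = real K ^ 2 * (L^2 / (q + 1)^2)"
      using q0 unfolding \<alpha>_def qK[symmetric]
      by (simp add: field_simps power2_eq_square) (simp add: add_divide_distrib[symmetric])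
    finally have "real K ^ 2 * d \<le> real K ^ 2 * (L^2 / (q + 1)^2)" .
    hence "d \<le> L^2 / (q + 1)^2" by (rule mult_left_le_imp_le) (use False in simp)
    thus ?thesis using xs unfolding d_def \<alpha>_def q_def by blast
  qed
qed

section \<open>Proper covers of convex sets\<close>

lemma exists_near_minimizer:
  fixes f :: "'a \<Rightarrow> real"
  assumes "U \<noteq> {}" "\<forall>u\<in>U. f u \<ge> 0" "\<eta> > 0"
  shows "\<exists>q\<in>U. \<forall>u\<in>U. f q \<le> f u + \<eta>"
proof -
  have ne: "f ` U \<noteq> {}" and bdd: "bdd_below (f ` U)"
    using assms by (auto intro: bdd_belowI[of _ 0])
  obtain q where q: "q \<in> U" "f q < Inf (f ` U) + \<eta>"
    using cInf_less_iff[OF ne bdd, of "Inf (f ` U) + \<eta>"] assms(3) by auto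
  have "f q \<le> f u + \<eta>" if "u \<in> U" for u
    using cInf_lower[OF imageI[OF that] bdd] q(2) by linarith
  thus ?thesis using q(1) by blast
qed

lemma near_projection_le:
  assumes U: "mat_convex U" and P: "P \<in> U" and x: "x \<in> U" and t: "0 < t" "t \<le> 1"
    and near: "\<forall>u\<in>U. frob_sq n m (\<lambda>k i. c k i - P k i) \<le> frob_sq n m (\<lambda>k i. c k i - u k i) + \<eta>"
  shows "(1 - t) * frob_sq n m (\<lambda>k i. x k i - P k i) \<le> frob_sq n m (\<lambda>k i. x k i - c k i) + \<eta> / t"
proof -
  define D where "D = (\<lambda>k i. c k i - P k i)"
  define E where "E = (\<lambda>k i. x k i - P k i)"
  have "(\<lambda>k i. (1 - t) * P k i + t * x k i) \<in> U"
    using U P x t unfolding mat_convex_def by simp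
  moreover have "(\<lambda>k i. c k i - ((1 - t) * P k i + t * x k i)) = (\<lambda>k i. D k i - t * E k i)"
    by (simp add: D_def E_def fun_eq_iff algebra_simps)
  ultimately have "frob_sq n m D \<le> frob_sq n m (\<lambda>k i. D k i - t * E k i) + \<eta>"
    using near unfolding D_def by force
  hence "t * (2 * frob_inner n m D E) \<le> t * (\<eta> / t + t * frob_sq n m E)"
    using t by (simp add: frob_sq_diff algebra_simps power2_eq_square)
  hence inner: "2 * frob_inner n m D E \<le> \<eta> / t + t * frob_sq n m E"
    using t by simp
  have "frob_sq n m (\<lambda>k i. x k i - c k i) = frob_sq n m (\<lambda>k i. E k i - 1 * D k i)"
    by (simp add: D_def E_def)
  also have "\<dots> = frob_sq n m E - 2 * frob_inner n m D E + frob_sq n m D"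
    by (subst frob_sq_diff) (simp add: frob_inner_commute)
  finally show ?thesis
    using inner frob_sq_nonneg[of n m D] by (simp add: E_def algebra_simps)
qed

text \<open>Centres outside \<open>U\<close> are replaced by approximate projections onto \<open>U\<close>; by the
  obtuse-angle property this costs at most the slack \<open>\<epsilon>\<^sup>2 - \<rho>\<close>.\<close>
lemma proper_cover_of_cover:
  assumes U: "mat_convex U" and ne: "U \<noteq> {}" and C: "finite C"
    and \<rho>: "0 \<le> \<rho>" "\<rho> < \<epsilon>^2" and \<epsilon>: "\<epsilon> > 0"
    and cover: "\<forall>x\<in>U. \<exists>c\<in>C. frob_sq n m (\<lambda>k i. x k i - c k i) \<le> \<rho>"
  shows "\<exists>W. finite W \<and> W \<subseteq> U \<and> card W \<le> card C \<and> (\<forall>x\<in>U. \<exists>w\<in>W. frob_dist n m x w \<le> \<epsilon>)"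
proof -
  define t where "t = (\<epsilon>^2 - \<rho>) / (2 * \<epsilon>^2)"
  define \<eta> where "\<eta> = t * (\<epsilon>^2 - \<rho>) / 2"
  have "\<epsilon>^2 > 0" using \<epsilon> by simp
  have t: "0 < t" "t < 1"
    using \<rho> \<open>\<epsilon>^2 > 0\<close> by (simp_all add: t_def divide_less_eq)
  have \<eta>: "\<eta> > 0" using t \<rho> by (simp add: \<eta>_def)
  have \<eta>_t: "\<eta> / t = (\<epsilon>^2 - \<rho>) / 2" using t by (simp add: \<eta>_def)
  have t_\<epsilon>: "(1 - t) * \<epsilon>^2 = (\<epsilon>^2 + \<rho>) / 2"
    using \<open>\<epsilon>^2 > 0\<close> by (simp add: t_def field_simps)
  have slack: "\<rho> + \<eta> / t = (1 - t) * \<epsilon>^2" unfolding \<eta>_t t_\<epsilon> by (simp add: field_simps)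
  have "\<exists>P. \<forall>c. P c \<in> U \<and>
      (\<forall>u\<in>U. frob_sq n m (\<lambda>k i. c k i - P c k i) \<le> frob_sq n m (\<lambda>k i. c k i - u k i) + \<eta>)"
  proof (rule choice, rule allI)
    fix c
    show "\<exists>P. P \<in> U \<and> (\<forall>u\<in>U. frob_sq n m (\<lambda>k i. c k i - P k i) \<le> frob_sq n m (\<lambda>k i. c k i - u k i) + \<eta>)"
      using exists_near_minimizer[OF ne _ \<eta>, of "\<lambda>u. frob_sq n m (\<lambda>k i. c k i - u k i)"]
      by (simp add: frob_sq_nonneg Bex_def)
  qed
  then obtain P where P: "\<And>c. P c \<in> U"
    and near: "\<And>c. \<forall>u\<in>U. frob_sq n m (\<lambda>k i. c k i - P c k i) \<le> frob_sq n m (\<lambda>k i. c k i - u k i) + \<eta>"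
    by blast
  show ?thesis
  proof (intro exI[of _ "P ` C"] conjI ballI)
    show "finite (P ` C)" "P ` C \<subseteq> U" "card (P ` C) \<le> card C"
      using C P by (auto intro: card_image_le)
    fix x assume x: "x \<in> U"
    obtain c where c: "c \<in> C" "frob_sq n m (\<lambda>k i. x k i - c k i) \<le> \<rho>" using cover x by blast
    have "(1 - t) * frob_sq n m (\<lambda>k i. x k i - P c k i) \<le> (1 - t) * \<epsilon>^2"
      using near_projection_le[OF U P x t(1) less_imp_le[OF t(2)] near[of c]] c(2) slack by linarith
    hence "frob_sq n m (\<lambda>k i. x k i - P c k i) \<le> \<epsilon>^2" using t by simp
    hence "frob_dist n m x (P c) \<le> sqrt (\<epsilon>^2)"
      unfolding frob_dist_eq_sqrt_frob_sq by (rule real_sqrt_le_mono)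
    hence "frob_dist n m x (P c) \<le> \<epsilon>" using \<epsilon> by simp
    thus "\<exists>w\<in>P ` C. frob_dist n m x w \<le> \<epsilon>" using c(1) by blast
  qed
qed

lemma covering_number_le_card:
  assumes "finite W" "W \<subseteq> U" "\<forall>x\<in>U. \<exists>w\<in>W. dst x w \<le> \<epsilon>"
  shows "covering_number dst U \<epsilon> \<le> card W"
  unfolding covering_number_def
  by (rule cInf_lower) (use assms in \<open>auto intro: bdd_belowI[of _ 0]\<close>)

lemma ln_le_of_le_power:
  assumes "real N \<le> real M ^ K" "real K \<le> T" "M \<ge> 1"
  shows "ln (real N) \<le> T * ln (real M)"
proof (cases "N = 0")
  case True
  thus ?thesis using assms(2,3) by simp
next
  case False
  hence "ln (real N) \<le> ln (real M ^ K)" using assms(1,3) by (subst ln_le_cancel_iff) auto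
  also have "\<dots> = real K * ln (real M)" using assms(3) by (simp add: ln_realpow)
  also have "\<dots> \<le> T * ln (real M)" using assms by (intro mult_right_mono) auto
  finally show ?thesis .
qed

lemma maurey_cover:
  fixes V :: "'z \<Rightarrow> nat \<Rightarrow> nat \<Rightarrow> real"
  assumes Z: "finite Z" and V: "\<forall>z\<in>Z. frob_sq n m (V z) \<le> 1"
    and hull: "\<forall>x\<in>U. \<exists>p. (\<forall>z\<in>Z. p z \<ge> 0) \<and> sum p Z = 1 \<and>
        (\<forall>k<n. \<forall>i<m. x k i = L * (\<Sum>z\<in>Z. p z * V z k i))"
  shows "\<exists>C. finite C \<and> card C \<le> card Z ^ K \<and>
    (\<forall>x\<in>U. \<exists>c\<in>C. frob_sq n m (\<lambda>k i. x k i - c k i) \<le> L^2 / (sqrt K + 1)^2)"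
proof (intro exI conjI)
  define C where "C = (\<lambda>xs k i. sqrt K / (sqrt K + 1) * L / K * (\<Sum>z\<leftarrow>xs. V z k i))
      ` {xs. set xs \<subseteq> Z \<and> length xs = K}"
  show "finite C" "card C \<le> card Z ^ K"
    unfolding C_def using Z card_image_le[of "{xs. set xs \<subseteq> Z \<and> length xs = K}"]
    by (simp_all add: finite_lists_length_eq card_lists_length_eq)
  show "\<forall>x\<in>U. \<exists>c\<in>C. frob_sq n m (\<lambda>k i. x k i - c k i) \<le> L^2 / (sqrt K + 1)^2"
  proof
    fix x assume "x \<in> U"
    then obtain p where p: "\<forall>z\<in>Z. p z \<ge> 0" "sum p Z = 1"
      "\<forall>k<n. \<forall>i<m. x k i = L * (\<Sum>z\<in>Z. p z * V z k i)"
      using hull by blast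
    obtain xs where xs: "set xs \<subseteq> Z" "length xs = K" and
      le: "frob_sq n m (\<lambda>k i. x k i - sqrt K / (sqrt K + 1) * L / K * (\<Sum>z\<leftarrow>xs. V z k i))
        \<le> L^2 / (sqrt K + 1)^2"
      using maurey_approximation[OF Z p(1,2) V p(3), of K] by blast
    have center: "(\<lambda>k i. sqrt K / (sqrt K + 1) * L / K * (\<Sum>z\<leftarrow>xs. V z k i)) \<in> C"
      unfolding C_def by (rule imageI) (use xs in simp)
    show "\<exists>c\<in>C. frob_sq n m (\<lambda>k i. x k i - c k i) \<le> L^2 / (sqrt K + 1)^2"
      by (rule bexI[OF _ center]) (use le in simp)
  qed
qed

lemma ln_covering_number_le_maurey:
  fixes U :: "(nat \<Rightarrow> nat \<Rightarrow> real) set" and Z :: "'z set" and V :: "'z \<Rightarrow> nat \<Rightarrow> nat \<Rightarrow> real"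
  assumes U: "mat_convex U" and ne: "U \<noteq> {}" and Z: "finite Z" "Z \<noteq> {}"
    and V: "\<forall>z\<in>Z. frob_sq n m (V z) \<le> 1" and \<epsilon>: "\<epsilon> > 0"
    and hull: "\<forall>x\<in>U. \<exists>p. (\<forall>z\<in>Z. p z \<ge> 0) \<and> sum p Z = 1 \<and>
        (\<forall>k<n. \<forall>i<m. x k i = L * (\<Sum>z\<in>Z. p z * V z k i))"
  shows "ln (real (covering_number (frob_dist n m) U \<epsilon>)) \<le> L^2 / \<epsilon>^2 * ln (real (card Z))"
proof -
  define K where "K = nat \<lfloor>L^2 / \<epsilon>^2\<rfloor>"
  have K: "real K = of_int \<lfloor>L^2 / \<epsilon>^2\<rfloor>" by (simp add: K_def)
  have "\<epsilon>^2 > 0" using \<epsilon> by simp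
  have radius: "0 \<le> L^2 / (sqrt K + 1)^2" "L^2 / (sqrt K + 1)^2 < \<epsilon>^2"
  proof -
    have "L^2 / \<epsilon>^2 < real K + 1" unfolding K by linarith
    also have "\<dots> \<le> (sqrt K + 1)^2" by (simp add: power2_eq_square algebra_simps)
    finally have "L^2 < (sqrt K + 1)^2 * \<epsilon>^2" using \<open>\<epsilon>^2 > 0\<close> by (simp add: divide_less_eq)
    moreover have "sqrt K + 1 > 0" by (intro add_nonneg_pos) auto
    ultimately show "L^2 / (sqrt K + 1)^2 < \<epsilon>^2" by (simp add: divide_less_eq mult.commute)
  qed simp
  obtain C where C: "finite C" "card C \<le> card Z ^ K"
    and cover: "\<forall>x\<in>U. \<exists>c\<in>C. frob_sq n m (\<lambda>k i. x k i - c k i) \<le> L^2 / (sqrt K + 1)^2"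
    using maurey_cover[OF Z(1) V hull] by blast
  obtain W where W: "finite W" "W \<subseteq> U" "card W \<le> card C"
      "\<forall>x\<in>U. \<exists>w\<in>W. frob_dist n m x w \<le> \<epsilon>"
    using proper_cover_of_cover[OF U ne C(1) radius \<epsilon> cover] by blast
  have "covering_number (frob_dist n m) U \<epsilon> \<le> card Z ^ K"
    using covering_number_le_card[OF W(1,2,4)] W(3) C(2) by linarith
  hence "real (covering_number (frob_dist n m) U \<epsilon>) \<le> real (card Z) ^ K"
    by (metis of_nat_le_iff of_nat_power)
  moreover have "real K \<le> L^2 / \<epsilon>^2" unfolding K by linarith
  moreover have "card Z \<ge> 1" using Z by (simp add: Suc_le_eq card_gt_0_iff)
  ultimately show ?thesis by (rule ln_le_of_le_power)
qed

lemma holder_inequality: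
  fixes f h :: "'a \<Rightarrow> real"
  assumes J: "finite J" and r: "r > 1" and s: "s > 1" and rs: "1/r + 1/s = 1"
    and f0: "\<And>j. j \<in> J \<Longrightarrow> f j \<ge> 0" and h0: "\<And>j. j \<in> J \<Longrightarrow> h j \<ge> 0"
  shows "(\<Sum>j\<in>J. f j * h j) \<le> (\<Sum>j\<in>J. f j powr r) powr (1/r) * (\<Sum>j\<in>J. h j powr s) powr (1/s)"
proof -
  define A where "A = (\<Sum>j\<in>J. f j powr r) powr (1/r)"
  define B where "B = (\<Sum>j\<in>J. h j powr s) powr (1/s)"
  have sum_eq_0: "\<forall>j\<in>J. u j = 0" if "(\<Sum>j\<in>J. u j powr t) = 0" for u :: "'a \<Rightarrow> real" and t
    using that J by (subst (asm) sum_nonneg_eq_0_iff) auto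
  consider "A = 0" | "B = 0" | "A > 0" "B > 0" by (fastforce simp: A_def B_def)
  then show ?thesis
  proof cases
    case 1
    thus ?thesis using sum_eq_0[of f r] by (simp add: A_def)
  next
    case 2
    thus ?thesis using sum_eq_0[of h s] by (simp add: B_def)
  next
    case 3
    have Ar: "A powr r = (\<Sum>j\<in>J. f j powr r)"
      unfolding A_def using r by (simp add: powr_powr sum_nonneg)
    have Bs: "B powr s = (\<Sum>j\<in>J. h j powr s)"
      unfolding B_def using s by (simp add: powr_powr sum_nonneg)
    have "(\<Sum>j\<in>J. (f j / A) * (h j / B)) \<le> (\<Sum>j\<in>J. (f j / A) powr r / r + (h j / B) powr s / s)"
      by (intro sum_mono Youngs_inequality) (use r s rs f0 h0 3 in auto)
    also have "\<dots> = (\<Sum>j\<in>J. f j powr r) / A powr r / r + (\<Sum>j\<in>J. h j powr s) / B powr s / s"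
      by (simp add: sum.distrib powr_divide sum_divide_distrib)
    also have "\<dots> = 1" unfolding Ar[symmetric] Bs[symmetric] using 3 rs by simp
    finally have "(\<Sum>j\<in>J. f j * h j) / (A * B) \<le> 1"
      by (simp add: sum_divide_distrib)
    thus ?thesis using 3 by (simp add: A_def B_def)
  qed
qed

lemma sqrt_sum_squares_le_lp_norm:
  fixes x :: "'a \<Rightarrow> real"
  assumes K: "finite K" and v: "0 < v" "v \<le> 2"
  shows "sqrt (\<Sum>k\<in>K. (x k)^2) \<le> (\<Sum>k\<in>K. \<bar>x k\<bar> powr v) powr (1/v)"
proof -
  define S where "S = (\<Sum>k\<in>K. \<bar>x k\<bar> powr v)"
  have S0: "S \<ge> 0" unfolding S_def by (intro sum_nonneg) auto
  have entry_le: "\<bar>x k\<bar> \<le> S powr (1/v)" if k: "k \<in> K" for k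
  proof -
    have "\<bar>x k\<bar> powr v \<le> S" unfolding S_def using K k by (intro member_le_sum) auto
    hence "(\<bar>x k\<bar> powr v) powr (1/v) \<le> S powr (1/v)" by (intro powr_mono2) (use v in auto)
    thus ?thesis using v by (simp add: powr_powr)
  qed
  have "(\<Sum>k\<in>K. (x k)^2) \<le> (\<Sum>k\<in>K. \<bar>x k\<bar> powr v * (S powr (1/v)) powr (2 - v))"
  proof (intro sum_mono)
    fix k assume k: "k \<in> K"
    have "(x k)^2 = \<bar>x k\<bar> powr v * \<bar>x k\<bar> powr (2 - v)"
      by (simp flip: powr_add add: powr_realpow')
    also have "\<dots> \<le> \<bar>x k\<bar> powr v * (S powr (1/v)) powr (2 - v)"
      by (intro mult_left_mono powr_mono2) (use v entry_le[OF k] in auto)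
    finally show "(x k)^2 \<le> \<bar>x k\<bar> powr v * (S powr (1/v)) powr (2 - v)" .
  qed
  also have "\<dots> = S * S powr ((2 - v)/v)"
    by (simp add: S_def sum_distrib_right powr_powr)
  also have "\<dots> = S powr (2/v)"
  proof (cases "S = 0")
    case False
    have "S powr (2/v) = S powr (1 + (2-v)/v)" using v by (simp add: field_simps)
    also have "\<dots> = S * S powr ((2 - v)/v)" using S0 False by (simp add: powr_add)
    finally show ?thesis by simp
  qed simp
  finally have "sqrt (\<Sum>k\<in>K. (x k)^2) \<le> sqrt (S powr (2/v))" by (rule real_sqrt_le_mono)
  also have "sqrt (S powr (2/v)) = S powr (1/v)"
    by (subst powr_half_sqrt[symmetric]) (auto simp: powr_powr)
  finally show ?thesis by (simp add: S_def)
qed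

lemma powr_convex_combination_le:
  fixes a b t r :: real
  assumes "r \<ge> 1" "a \<ge> 0" "b \<ge> 0" "0 \<le> t" "t \<le> 1"
  shows "((1-t)*a + t*b) powr r \<le> (1-t) * a powr r + t * b powr r"
proof (cases "a = 0 \<or> b = 0")
  case True
  have le_self: "u powr r \<le> u" if "0 \<le> u" "u \<le> 1" for u :: real
    using powr_mono'[of 1 r u] that assms(1) by simp
  show ?thesis using True
  proof
    assume "a = 0"
    hence "((1-t)*a + t*b) powr r = t powr r * b powr r" by (simp add: powr_mult assms)
    also have "\<dots> \<le> t * b powr r" by (intro mult_right_mono le_self) (use assms in auto)
    finally show ?thesis using \<open>a = 0\<close> assms by simp
  next
    assume "b = 0"
    hence "((1-t)*a + t*b) powr r = (1-t) powr r * a powr r" by (simp add: powr_mult assms)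
    also have "\<dots> \<le> (1-t) * a powr r" by (intro mult_right_mono le_self) (use assms in auto)
    finally show ?thesis using \<open>b = 0\<close> assms by simp
  qed
next
  case False
  hence "a \<in> {0<..}" "b \<in> {0<..}" using assms by auto
  from convex_onD[OF powr_convex[OF assms(1)] assms(4,5) this] show ?thesis by simp
qed

lemma conjugate_exponent_gt_1:
  fixes r s :: real
  assumes "r > 0" "s > 0" "1/r + 1/s = 1"
  shows "r > 1"
proof -
  have "0 < 1/s" using assms(2) by simp
  hence "1/r < 1" using assms(3) by linarith
  thus ?thesis using assms(1) by (simp add: field_simps)
qed

lemma sum_sum_eq_sum_product:
  fixes F :: "nat \<Rightarrow> nat \<Rightarrow> real"
  shows "(\<Sum>i<m. \<Sum>j<p. F i j) = (\<Sum>z\<in>{..<m} \<times> {..<p}. F (fst z) (snd z))"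
  by (simp add: sum.cartesian_product split_beta)

lemma sum_signed_index:
  fixes F :: "nat \<times> nat \<times> bool \<Rightarrow> real"
  shows "(\<Sum>z\<in>{..<m} \<times> {..<p} \<times> {True,False}. F z) = (\<Sum>i<m. \<Sum>j<p. F (i,j,True) + F (i,j,False))"
proof -
  have "(\<Sum>z\<in>{..<m} \<times> {..<p} \<times> {True,False}. F z) = (\<Sum>i<m. \<Sum>y\<in>{..<p} \<times> {True,False}. F (i,y))"
    by (subst sum.cartesian_product) (simp add: split_beta)
  also have "\<dots> = (\<Sum>i<m. \<Sum>j<p. \<Sum>\<sigma>\<in>{True,False}. F (i,j,\<sigma>))"
    by (intro sum.cong refl, subst sum.cartesian_product) (simp add: split_beta)
  finally show ?thesis by simp
qed

section \<open>Linear combinations of fixed features\<close>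

definition feature_mat :: "nat \<Rightarrow> nat \<Rightarrow> (nat \<Rightarrow> nat \<Rightarrow> 'x \<Rightarrow> real) \<Rightarrow> (nat \<Rightarrow> 'x) \<Rightarrow>
    nat \<Rightarrow> nat \<Rightarrow> nat \<Rightarrow> nat \<Rightarrow> real" where
  "feature_mat n m g X i j = (\<lambda>k i'. if k < n \<and> i' < m \<and> i' = i then g i j (X k) else 0)"

definition feature_norm :: "nat \<Rightarrow> (nat \<Rightarrow> nat \<Rightarrow> 'x \<Rightarrow> real) \<Rightarrow> (nat \<Rightarrow> 'x) \<Rightarrow> nat \<Rightarrow> nat \<Rightarrow> real" where
  "feature_norm n g X i j = sqrt (\<Sum>k<n. (g i j (X k))^2)"

text \<open>The atoms \<open>\<plusminus>G\<^sub>i\<^sub>j / \<parallel>G\<^sub>i\<^sub>j\<parallel>\<close> of Maurey's argument; a vanishing feature gives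
  the zero atom, since \<open>1 / 0 = 0\<close>.\<close>
definition signed_unit_feature :: "nat \<Rightarrow> nat \<Rightarrow> (nat \<Rightarrow> nat \<Rightarrow> 'x \<Rightarrow> real) \<Rightarrow> (nat \<Rightarrow> 'x) \<Rightarrow>
    nat \<times> nat \<times> bool \<Rightarrow> nat \<Rightarrow> nat \<Rightarrow> real" where
  "signed_unit_feature n m g X =
     (\<lambda>(i, j, \<sigma>) k i'. (if \<sigma> then 1 else -1) / feature_norm n g X i j * feature_mat n m g X i j k i')"

lemma frob_sq_feature_mat:
  "frob_sq n m (feature_mat n m g X i j) \<le> feature_norm n g X i j ^ 2"
proof -
  have "(\<Sum>i'<m. (feature_mat n m g X i j k i')^2) \<le> (g i j (X k))^2" if "k < n" for k
  proof -
    have "(\<Sum>i'<m. (feature_mat n m g X i j k i')^2) = (\<Sum>i'\<in>{..<m} \<inter> {i}. (g i j (X k))^2)"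
      using that by (intro sum.mono_neutral_cong_right) (auto simp: feature_mat_def)
    also have "\<dots> \<le> (g i j (X k))^2" by (cases "i < m") auto
    finally show ?thesis .
  qed
  hence "frob_sq n m (feature_mat n m g X i j) \<le> (\<Sum>k<n. (g i j (X k))^2)"
    unfolding frob_sq_def by (intro sum_mono) auto
  thus ?thesis by (simp add: feature_norm_def sum_nonneg)
qed

lemma frob_sq_signed_unit_feature_le_1: "frob_sq n m (signed_unit_feature n m g X z) \<le> 1"
proof -
  obtain i j \<sigma> where z: "z = (i, j, \<sigma>)" by (cases z) auto
  have "frob_sq n m (signed_unit_feature n m g X z)
      = (1 / feature_norm n g X i j)^2 * frob_sq n m (feature_mat n m g X i j)"
    unfolding z signed_unit_feature_def
    using frob_sq_scale[of n m "(if \<sigma> then 1 else -1) / feature_norm n g X i j"]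
    by (simp add: power_divide)
  also have "\<dots> \<le> (1 / feature_norm n g X i j)^2 * feature_norm n g X i j ^ 2"
    by (intro mult_left_mono frob_sq_feature_mat) simp
  also have "\<dots> \<le> 1" by (simp add: power_divide)
  finally show ?thesis .
qed

lemma feature_mat_eq_0:
  assumes "feature_norm n g X i j = 0"
  shows "feature_mat n m g X i j = (\<lambda>k i'. 0)"
proof -
  have "\<forall>k\<in>{..<n}. (g i j (X k))^2 = 0"
    using assms by (subst sum_nonneg_eq_0_iff[symmetric]) (auto simp: feature_norm_def)
  thus ?thesis by (auto simp: feature_mat_def fun_eq_iff)
qed

lemma entry_norm_le_iff:
  assumes "r > 0" "b > 0"
  shows "entry_norm r m p B \<le> b \<longleftrightarrow> (\<Sum>i<m. \<Sum>j<p. \<bar>B i j\<bar> powr r) \<le> b powr r"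
proof -
  define S where "S = (\<Sum>i<m. \<Sum>j<p. \<bar>B i j\<bar> powr r)"
  have S0: "S \<ge> 0" unfolding S_def by (intro sum_nonneg) auto
  have "S powr (1/r) \<le> b \<longleftrightarrow> S \<le> b powr r"
  proof
    assume "S powr (1/r) \<le> b"
    hence "(S powr (1/r)) powr r \<le> b powr r" by (intro powr_mono2) (use assms S0 in auto)
    thus "S \<le> b powr r" using assms S0 by (simp add: powr_powr)
  next
    assume "S \<le> b powr r"
    hence "S powr (1/r) \<le> (b powr r) powr (1/r)" by (intro powr_mono2) (use assms S0 in auto)
    thus "S powr (1/r) \<le> b" using assms by (simp add: powr_powr)
  qed
  thus ?thesis by (simp add: entry_norm_def S_def)
qed

lemma entry_norm_convex_combination_le:
  assumes r: "r \<ge> 1" and b: "b > 0" and t: "0 \<le> t" "t \<le> 1"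
    and B1: "entry_norm r m p B1 \<le> b" and B2: "entry_norm r m p B2 \<le> b"
  shows "entry_norm r m p (\<lambda>i j. (1-t) * B1 i j + t * B2 i j) \<le> b"
proof -
  have "(\<Sum>i<m. \<Sum>j<p. \<bar>(1-t) * B1 i j + t * B2 i j\<bar> powr r)
      \<le> (\<Sum>i<m. \<Sum>j<p. (1-t) * \<bar>B1 i j\<bar> powr r + t * \<bar>B2 i j\<bar> powr r)"
  proof (intro sum_mono)
    fix i j
    have "\<bar>(1-t) * B1 i j + t * B2 i j\<bar> \<le> (1-t) * \<bar>B1 i j\<bar> + t * \<bar>B2 i j\<bar>"
      using t abs_triangle_ineq[of "(1-t) * B1 i j" "t * B2 i j"] by (simp add: abs_mult)
    hence "\<bar>(1-t) * B1 i j + t * B2 i j\<bar> powr r \<le> ((1-t) * \<bar>B1 i j\<bar> + t * \<bar>B2 i j\<bar>) powr r"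
      by (intro powr_mono2) (use r in auto)
    also have "\<dots> \<le> (1-t) * \<bar>B1 i j\<bar> powr r + t * \<bar>B2 i j\<bar> powr r"
      by (rule powr_convex_combination_le) (use r t in auto)
    finally show "\<bar>(1-t) * B1 i j + t * B2 i j\<bar> powr r \<le> (1-t) * \<bar>B1 i j\<bar> powr r + t * \<bar>B2 i j\<bar> powr r" .
  qed
  also have "\<dots> = (1-t) * (\<Sum>i<m. \<Sum>j<p. \<bar>B1 i j\<bar> powr r) + t * (\<Sum>i<m. \<Sum>j<p. \<bar>B2 i j\<bar> powr r)"
    by (simp add: sum.distrib sum_distrib_left)
  also have "\<dots> \<le> (1-t) * b powr r + t * b powr r"
    using B1 B2 entry_norm_le_iff[of r b m p] r b t by (intro add_mono mult_left_mono) auto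
  finally show ?thesis using entry_norm_le_iff r b by (simp add: algebra_simps)
qed

lemma mat_convex_Psi_mat_ball:
  assumes r: "r \<ge> 1" and b: "b > 0"
  shows "mat_convex {Psi_mat m p n g X B | B. entry_norm r m p B \<le> b}"
  unfolding mat_convex_def
proof (intro ballI allI impI)
  fix x y and t :: real
  assume "x \<in> {Psi_mat m p n g X B | B. entry_norm r m p B \<le> b}"
    and "y \<in> {Psi_mat m p n g X B | B. entry_norm r m p B \<le> b}" and t: "0 \<le> t \<and> t \<le> 1"
  then obtain B1 B2 where B1: "x = Psi_mat m p n g X B1" "entry_norm r m p B1 \<le> b"
    and B2: "y = Psi_mat m p n g X B2" "entry_norm r m p B2 \<le> b" by auto
  define B where "B = (\<lambda>i j. (1-t) * B1 i j + t * B2 i j)"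
  have "(\<Sum>j<p. B i j * g i j (X k))
      = (1-t) * (\<Sum>j<p. B1 i j * g i j (X k)) + t * (\<Sum>j<p. B2 i j * g i j (X k))" for i k
    unfolding B_def sum_distrib_left sum.distrib[symmetric] by (intro sum.cong refl) (simp add: algebra_simps)
  hence "(\<lambda>k i. (1-t) * x k i + t * y k i) = Psi_mat m p n g X B"
    unfolding B1 B2 Psi_mat_def by (simp add: fun_eq_iff)
  moreover have "entry_norm r m p B \<le> b"
    unfolding B_def using entry_norm_convex_combination_le[OF r b _ _ B1(2) B2(2)] t by blast
  ultimately show "(\<lambda>k i. (1-t) * x k i + t * y k i) \<in> {Psi_mat m p n g X B | B. entry_norm r m p B \<le> b}"
    by blast
qed

lemma weighted_feature_norm_le:
  assumes r: "r > 1" and s: "s > 1" and rs: "1/r + 1/s = 1" and v: "0 < v" "v \<le> 2"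
    and G: "G_norm v s m p n g X \<le> c" and B: "entry_norm r m p B \<le> b" and b: "b > 0"
  shows "(\<Sum>i<m. \<Sum>j<p. \<bar>B i j\<bar> * feature_norm n g X i j) \<le> b * c"
proof -
  let ?J = "{..<m} \<times> {..<p}"
  define lp where "lp = (\<lambda>i j. (\<Sum>k<n. \<bar>g i j (X k)\<bar> powr v) powr (1/v))"
  define A where "A = (\<Sum>z\<in>?J. feature_norm n g X (fst z) (snd z) powr s) powr (1/s)"
  have norm_nonneg: "feature_norm n g X i j \<ge> 0" for i j by (simp add: feature_norm_def sum_nonneg)
  have "(\<Sum>i<m. \<Sum>j<p. \<bar>B i j\<bar> * feature_norm n g X i j)
      = (\<Sum>z\<in>?J. \<bar>B (fst z) (snd z)\<bar> * feature_norm n g X (fst z) (snd z))"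
    by (rule sum_sum_eq_sum_product)
  also have "\<dots> \<le> (\<Sum>z\<in>?J. \<bar>B (fst z) (snd z)\<bar> powr r) powr (1/r) * A"
    unfolding A_def by (rule holder_inequality) (use r s rs norm_nonneg in auto)
  also have "(\<Sum>z\<in>?J. \<bar>B (fst z) (snd z)\<bar> powr r) powr (1/r) = entry_norm r m p B"
    unfolding entry_norm_def sum_sum_eq_sum_product ..
  finally have holder: "(\<Sum>i<m. \<Sum>j<p. \<bar>B i j\<bar> * feature_norm n g X i j) \<le> entry_norm r m p B * A" .
  have "(\<Sum>z\<in>?J. feature_norm n g X (fst z) (snd z) powr s) \<le> (\<Sum>z\<in>?J. lp (fst z) (snd z) powr s)"
  proof (intro sum_mono powr_mono2)
    fix z
    show "feature_norm n g X (fst z) (snd z) \<le> lp (fst z) (snd z)"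
      unfolding feature_norm_def lp_def by (rule sqrt_sum_squares_le_lp_norm) (use v in auto)
  qed (use s norm_nonneg in auto)
  also have "\<dots> = (\<Sum>i<m. \<Sum>j<p. (\<Sum>k<n. \<bar>g i j (X k)\<bar> powr v) powr (s / v))"
    unfolding sum_sum_eq_sum_product lp_def using v by (simp add: powr_powr)
  finally have "A \<le> G_norm v s m p n g X"
    unfolding A_def G_norm_def using s by (intro powr_mono2) (auto intro: sum_nonneg)
  hence "entry_norm r m p B * A \<le> b * c"
    using B G by (intro mult_mono) (auto simp: A_def entry_norm_def b less_imp_le)
  with holder show ?thesis by linarith
qed

lemma Psi_mat_in_scaled_hull:
  fixes B :: "nat \<Rightarrow> nat \<Rightarrow> real"
  assumes mp: "m \<ge> 1" "p \<ge> 1" and L: "L > 0"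
    and weight: "(\<Sum>i<m. \<Sum>j<p. \<bar>B i j\<bar> * feature_norm n g X i j) \<le> L"
  defines "Z \<equiv> {..<m} \<times> {..<p} \<times> {True, False}"
  shows "\<exists>w. (\<forall>z\<in>Z. w z \<ge> 0) \<and> sum w Z = 1 \<and>
     (\<forall>k<n. \<forall>i<m. Psi_mat m p n g X B k i = L * (\<Sum>z\<in>Z. w z * signed_unit_feature n m g X z k i))"
proof -
  define W where "W = (\<Sum>i<m. \<Sum>j<p. \<bar>B i j\<bar> * feature_norm n g X i j)"
  \<comment> \<open>The unused mass is spread evenly over pairs of opposite atoms, where it cancels.\<close>
  define q where "q = (1 - W / L) / (2 * real m * real p)"
  define w where "w = (\<lambda>(i, j, \<sigma>). (if \<sigma> = (0 \<le> B i j)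
      then \<bar>B i j\<bar> * feature_norm n g X i j / L else 0) + q)"
  have norm_nonneg: "feature_norm n g X i j \<ge> 0" for i j by (simp add: feature_norm_def sum_nonneg)
  have q0: "q \<ge> 0" using weight L mp by (simp add: q_def W_def field_simps)
  show ?thesis
  proof (intro exI[of _ w] conjI ballI allI impI)
    fix z assume "z \<in> Z"
    show "w z \<ge> 0" unfolding w_def using q0 norm_nonneg L by (auto split: prod.split)
  next
    have "sum w Z = (\<Sum>i<m. \<Sum>j<p. \<bar>B i j\<bar> * feature_norm n g X i j / L + 2 * q)"
      unfolding Z_def sum_signed_index by (intro sum.cong refl) (auto simp: w_def)
    also have "\<dots> = W / L + real m * real p * 2 * q"
      by (simp add: sum.distrib W_def sum_divide_distrib)
    also have "\<dots> = 1" using mp by (simp add: q_def field_simps)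
    finally show "sum w Z = 1" .
  next
    fix k i' assume k: "k < n" and i': "i' < m"
    have pair: "w (i, j, True) * signed_unit_feature n m g X (i, j, True) k i'
        + w (i, j, False) * signed_unit_feature n m g X (i, j, False) k i'
        = B i j * feature_mat n m g X i j k i' / L" for i j
    proof (cases "feature_norm n g X i j = 0")
      case True
      thus ?thesis by (simp add: signed_unit_feature_def feature_mat_eq_0)
    next
      case False
      thus ?thesis by (auto simp: w_def signed_unit_feature_def field_simps)
    qed
    have "(\<Sum>z\<in>Z. w z * signed_unit_feature n m g X z k i')
        = (\<Sum>i<m. \<Sum>j<p. B i j * feature_mat n m g X i j k i' / L)"
      unfolding Z_def sum_signed_index pair ..
    also have "\<dots> = (\<Sum>i<m. if i = i' then (\<Sum>j<p. B i' j * g i' j (X k)) / L else 0)"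
      using k i' by (intro sum.cong refl) (auto simp: feature_mat_def sum_divide_distrib)
    also have "\<dots> = (\<Sum>j<p. B i' j * g i' j (X k)) / L" using i' by simp
    finally show "Psi_mat m p n g X B k i' = L * (\<Sum>z\<in>Z. w z * signed_unit_feature n m g X z k i')"
      using k i' L by (simp add: Psi_mat_def)
  qed
qed

theorem proposition2:
  fixes g :: "nat \<Rightarrow> nat \<Rightarrow> real^'d \<Rightarrow> real"
    and X :: "nat \<Rightarrow> real^'d"
    and m p n :: nat and v r s b c \<epsilon> :: real
  assumes "m \<ge> 1" "p \<ge> 1" "n \<ge> 1"
    and "0 < v" "v \<le> 2" "r > 0" "s > 0" "1 / r + 1 / s = 1"
    and "b > 0" "c > 0"
    and "G_norm v s m p n g X \<le> c"
    and "\<epsilon> > 0"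
  shows "ln (real (covering_number (frob_dist n m)
            {Psi_mat m p n g X B | B. entry_norm r m p B \<le> b} \<epsilon>))
         \<le> b^2 * c^2 / \<epsilon>^2 * ln (2 * real m * real p)"
proof -
  let ?U = "{Psi_mat m p n g X B | B. entry_norm r m p B \<le> b}"
  let ?Z = "{..<m} \<times> {..<p} \<times> {True, False}"
  have r: "r > 1" and s: "s > 1"
    using conjugate_exponent_gt_1[of r s] conjugate_exponent_gt_1[of s r] assms(6-8) by auto
  have "ln (real (covering_number (frob_dist n m) ?U \<epsilon>)) \<le> (b * c)^2 / \<epsilon>^2 * ln (real (card ?Z))"
  proof (rule ln_covering_number_le_maurey[where V = "signed_unit_feature n m g X"])
    show "mat_convex ?U" by (rule mat_convex_Psi_mat_ball) (use r assms(9) in auto)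
    have "entry_norm r m p (\<lambda>i j. 0) \<le> b" using assms(9) r by (simp add: entry_norm_def)
    thus "?U \<noteq> {}" by blast
    have "(0, 0, True) \<in> ?Z" using assms(1,2) by auto
    thus "?Z \<noteq> {}" by blast
    show "finite ?Z" "\<forall>z\<in>?Z. frob_sq n m (signed_unit_feature n m g X z) \<le> 1"
      by (simp_all add: frob_sq_signed_unit_feature_le_1)
    show "\<forall>x\<in>?U. \<exists>w. (\<forall>z\<in>?Z. w z \<ge> 0) \<and> sum w ?Z = 1 \<and>
        (\<forall>k<n. \<forall>i<m. x k i = (b * c) * (\<Sum>z\<in>?Z. w z * signed_unit_feature n m g X z k i))"
      using Psi_mat_in_scaled_hull[OF assms(1,2) _ weighted_feature_norm_le[OF r s assms(8,4,5,11)]]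
        assms(9,10) by fastforce
  qed (rule assms(12))
  also have "\<dots> = b^2 * c^2 / \<epsilon>^2 * ln (2 * real m * real p)"
    by (simp add: card_cartesian_product power_mult_distrib mult_ac)
  finally show ?thesis .
qed

end
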